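(* Let $n$ be a positive integer and $\mathscr{R}$ a type $I_n$ von Neumann algebra. Then the set $\mathcal{S}(\mathscr{R})^4$ of unitaries in $\mathscr{R}$ that can be written as a product of four symmetries in $\mathscr{R}$ is not norm-dense in the unitary group $\mathcal{U}(\mathscr{R})$ of $\mathscr{R}$.
   Context: A symmetry is a self-adjoint unitary. For a von Neumann algebra $\mathscr{M}$ and $k \in \mathbb{N}$, $\mathcal{S}(\mathscr{M})^k$ denotes the set of unitaries in $\mathscr{M}$ that are products of $k$ symmetries in $\mathscr{M}$, and $\mathcal{U}(\mathscr{M})$ denotes the unitary group of $\mathscr{M}$. *)

theory Defs
  imports "HOL-Analysis.Analysis"
begin

text \<open>Concrete complex Hilbert spaces: every complex Hilbert space is unitarily
  isomorphic to l2(I) for an index set I (given by an orthonormal basis), so we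
  work on l2 over an arbitrary index type 'i.\<close>

type_synonym 'i vec = "'i \<Rightarrow> complex"
type_synonym 'i op = "'i vec \<Rightarrow> 'i vec"

definition l2 :: "'i vec set" where
  "l2 = {x. (\<lambda>i. (cmod (x i))\<^sup>2) summable_on UNIV}"

definition l2norm :: "'i vec \<Rightarrow> real" where
  "l2norm x = sqrt (infsum (\<lambda>i. (cmod (x i))\<^sup>2) UNIV)"

definition cinner :: "'i vec \<Rightarrow> 'i vec \<Rightarrow> complex" where
  "cinner x y = infsum (\<lambda>i. cnj (x i) * y i) UNIV"

text \<open>Bounded linear operators on l2(I).  Canonical representative: an operator
  maps every non-l2 function to 0, so that operators are equal iff equal on l2.\<close>

definition bounded_ops :: "'i op set" where
  "bounded_ops = {T.
      (\<forall>x\<in>l2. T x \<in> l2) \<and>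
      (\<forall>x. x \<notin> l2 \<longrightarrow> T x = (\<lambda>i. 0)) \<and>
      (\<forall>x\<in>l2. \<forall>y\<in>l2. \<forall>c::complex. T (\<lambda>i. c * x i + y i) = (\<lambda>i. c * T x i + T y i)) \<and>
      (\<exists>K. \<forall>x\<in>l2. l2norm (T x) \<le> K * l2norm x)}"

definition idop :: "'i op" where
  "idop x = (if x \<in> l2 then x else (\<lambda>i. 0))"

definition zeroop :: "'i op" where
  "zeroop x = (\<lambda>i. 0)"

definition opnorm :: "'i op \<Rightarrow> real" where
  "opnorm T = (SUP x\<in>{x\<in>l2. l2norm x \<le> 1}. l2norm (T x))"

definition op_diff :: "'i op \<Rightarrow> 'i op \<Rightarrow> 'i op" where
  "op_diff S T = (\<lambda>x i. S x i - T x i)"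

definition is_adjoint :: "'i op \<Rightarrow> 'i op \<Rightarrow> bool" where
  "is_adjoint T S \<longleftrightarrow> (\<forall>x\<in>l2. \<forall>y\<in>l2. cinner (T x) y = cinner x (S y))"

definition adj :: "'i op \<Rightarrow> 'i op" where
  "adj T = (THE S. S \<in> bounded_ops \<and> is_adjoint T S)"

definition commutant :: "'i op set \<Rightarrow> 'i op set" where
  "commutant M = {T \<in> bounded_ops. \<forall>S\<in>M. T \<circ> S = S \<circ> T}"

definition von_neumann_algebra :: "'i op set \<Rightarrow> bool" where
  "von_neumann_algebra M \<longleftrightarrow>
     M \<subseteq> bounded_ops \<and> idop \<in> M \<and>
     (\<forall>T\<in>M. adj T \<in> M) \<and>
     (\<forall>S\<in>M. \<forall>T\<in>M. S \<circ> T \<in> M) \<and>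
     (\<forall>S\<in>M. \<forall>T\<in>M. \<forall>c::complex. (\<lambda>x i. c * S x i + T x i) \<in> M) \<and>
     commutant (commutant M) = M"

definition unitaries :: "'i op set \<Rightarrow> 'i op set" where
  "unitaries M = {U \<in> M. adj U \<circ> U = idop \<and> U \<circ> adj U = idop}"

definition symmetries :: "'i op set \<Rightarrow> 'i op set" where
  "symmetries M = {U \<in> unitaries M. adj U = U}"

definition sym_products :: "'i op set \<Rightarrow> nat \<Rightarrow> 'i op set" where
  "sym_products M k =
     {foldr (\<circ>) ss idop | ss. length ss = k \<and> set ss \<subseteq> symmetries M}"

definition is_projection :: "'i op set \<Rightarrow> 'i op \<Rightarrow> bool" where
  "is_projection M E \<longleftrightarrow> E \<in> M \<and> adj E = E \<and> E \<circ> E = E"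

definition abelian_projection :: "'i op set \<Rightarrow> 'i op \<Rightarrow> bool" where
  "abelian_projection M E \<longleftrightarrow> is_projection M E \<and>
     (\<forall>A\<in>M. \<forall>B\<in>M. (E \<circ> A \<circ> E) \<circ> (E \<circ> B \<circ> E) = (E \<circ> B \<circ> E) \<circ> (E \<circ> A \<circ> E))"

definition mvn_equiv :: "'i op set \<Rightarrow> 'i op \<Rightarrow> 'i op \<Rightarrow> bool" where
  "mvn_equiv M E F \<longleftrightarrow> (\<exists>V\<in>M. adj V \<circ> V = E \<and> V \<circ> adj V = F)"

definition type_I_n :: "nat \<Rightarrow> 'i op set \<Rightarrow> bool" where
  "type_I_n n M \<longleftrightarrow> von_neumann_algebra M \<and>
     (\<exists>E :: nat \<Rightarrow> 'i op.
        (\<forall>k<n. abelian_projection M (E k)) \<and>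
        (\<forall>j<n. \<forall>k<n. j \<noteq> k \<longrightarrow> E j \<circ> E k = zeroop) \<and>
        (\<forall>j<n. \<forall>k<n. mvn_equiv M (E j) (E k)) \<and>
        (\<lambda>x i. \<Sum>k<n. E k x i) = idop)"

definition norm_dense_in :: "'i op set \<Rightarrow> 'i op set \<Rightarrow> bool" where
  "norm_dense_in A B \<longleftrightarrow> (\<forall>U\<in>B. \<forall>e>0. \<exists>V\<in>A. opnorm (op_diff U V) < e)"

end

theory Submission
  imports Defs "Jordan_Normal_Form.Determinant"
begin

(* A type I_n algebra R is the algebra of n x n matrices over its abelian corner A = E_0 R E_0,
   via X |-> (E_0 W_j^* X W_k E_0)_{j,k}, where W_k are partial isometries from E_0 to E_k.
   The determinant of this matrix is a multiplicative, norm-continuous map D : R -> A sending the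
   scalar c to c^n E_0.  A symmetry S has D(S)^2 = D(S^2) = E_0, hence D(V)^2 = E_0 for every
   product V of symmetries, whereas the scalar unitary w with w^n = i has D(w)^2 = -E_0.  By
   continuity of D, no product of symmetries, of any fixed length, comes close to w. *)

section \<open>Bounded operators on l2\<close>

lemma l2_zero [simp]: "(\<lambda>i. 0) \<in> l2"
  unfolding l2_def by simp

lemma l2_lincomb:
  assumes x: "x \<in> l2" and y: "y \<in> l2"
  shows "(\<lambda>i. c * x i + y i) \<in> l2"
proof -
  have sx: "(\<lambda>i. (cmod (x i))\<^sup>2) summable_on UNIV" using x unfolding l2_def by simp
  have sy: "(\<lambda>i. (cmod (y i))\<^sup>2) summable_on UNIV" using y unfolding l2_def by simp
  have s: "(\<lambda>i. 2 * (cmod c)\<^sup>2 * (cmod (x i))\<^sup>2 + 2 * (cmod (y i))\<^sup>2) summable_on UNIV"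
    by (intro summable_on_add summable_on_cmult_right sx sy)
  have le: "(cmod (c * x i + y i))\<^sup>2 \<le> 2 * (cmod c)\<^sup>2 * (cmod (x i))\<^sup>2 + 2 * (cmod (y i))\<^sup>2" for i
  proof -
    have "cmod (c * x i + y i) \<le> cmod c * cmod (x i) + cmod (y i)"
      by (metis norm_mult norm_triangle_ineq)
    hence "(cmod (c * x i + y i))\<^sup>2 \<le> (cmod c * cmod (x i) + cmod (y i))\<^sup>2"
      by (simp add: power_mono)
    also have "\<dots> \<le> 2 * (cmod c)\<^sup>2 * (cmod (x i))\<^sup>2 + 2 * (cmod (y i))\<^sup>2"
      using zero_le_power2[of "cmod c * cmod (x i) - cmod (y i)"]
      by (simp add: power2_eq_square algebra_simps)
    finally show ?thesis .
  qed
  show ?thesis unfolding l2_def mem_Collect_eq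
    by (rule summable_on_comparison_test[OF s]) (auto intro: le)
qed

lemma l2_add: "x \<in> l2 \<Longrightarrow> y \<in> l2 \<Longrightarrow> (\<lambda>i. x i + y i) \<in> l2"
  using l2_lincomb[of x y 1] by simp

lemma l2_scale: "x \<in> l2 \<Longrightarrow> (\<lambda>i. c * x i) \<in> l2"
  using l2_lincomb[of x "\<lambda>i. 0" c] by simp

lemma l2_sum: "finite F \<Longrightarrow> (\<And>l. l \<in> F \<Longrightarrow> v l \<in> l2) \<Longrightarrow> (\<lambda>i. \<Sum>l\<in>F. v l i) \<in> l2"
  by (induction F rule: finite_induct) (simp_all add: l2_add)

lemma l2norm_nonneg [simp]: "0 \<le> l2norm x"
  unfolding l2norm_def by (simp add: infsum_nonneg)

lemma l2norm_zero [simp]: "l2norm (\<lambda>i. 0) = 0"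
  unfolding l2norm_def by simp

lemma l2norm_scale: "l2norm (\<lambda>i. c * x i) = cmod c * l2norm x"
proof -
  have "(\<Sum>\<^sub>\<infinity>i. (cmod (c * x i))\<^sup>2) = (cmod c)\<^sup>2 * (\<Sum>\<^sub>\<infinity>i. (cmod (x i))\<^sup>2)"
    by (simp add: norm_mult power_mult_distrib infsum_cmult_right')
  thus ?thesis unfolding l2norm_def by (simp add: real_sqrt_mult)
qed

lemma l2norm_eq_0:
  assumes x: "x \<in> l2" and z: "l2norm x = 0"
  shows "x = (\<lambda>i. 0)"
proof
  fix j
  have sx: "(\<lambda>i. (cmod (x i))\<^sup>2) summable_on UNIV" using x unfolding l2_def by simp
  have "(\<Sum>\<^sub>\<infinity>i. (cmod (x i))\<^sup>2) = 0" using z unfolding l2norm_def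
    by (metis infsum_nonneg real_sqrt_eq_zero_cancel_iff zero_le_power2)
  moreover have "sum (\<lambda>i. (cmod (x i))\<^sup>2) {j} \<le> (\<Sum>\<^sub>\<infinity>i. (cmod (x i))\<^sup>2)"
    by (rule finite_sum_le_infsum[OF sx]) auto
  ultimately have "(cmod (x j))\<^sup>2 \<le> 0" by simp
  thus "x j = 0" by simp
qed

lemma l2norm_triangle:
  assumes x: "x \<in> l2" and y: "y \<in> l2"
  shows "l2norm (\<lambda>i. x i + y i) \<le> l2norm x + l2norm y"
proof -
  have sx: "(\<lambda>i. (cmod (x i))\<^sup>2) summable_on UNIV" using x unfolding l2_def by simp
  have sy: "(\<lambda>i. (cmod (y i))\<^sup>2) summable_on UNIV" using y unfolding l2_def by simp
  have sxy: "(\<lambda>i. (cmod (x i + y i))\<^sup>2) summable_on UNIV"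
    using l2_add[OF x y] unfolding l2_def by simp
  have L2_set_le: "L2_set (\<lambda>i. cmod (z i)) F \<le> l2norm z"
    if "(\<lambda>i. (cmod (z i))\<^sup>2) summable_on UNIV" "finite F" for z :: "'a \<Rightarrow> complex" and F
    unfolding L2_set_def l2norm_def
    by (rule real_sqrt_le_mono, rule finite_sum_le_infsum[OF that]) auto
  have partial_sums: "sum (\<lambda>i. (cmod (x i + y i))\<^sup>2) F \<le> (l2norm x + l2norm y)\<^sup>2"
    if F: "finite F" for F
  proof -
    have "L2_set (\<lambda>i. cmod (x i + y i)) F \<le> L2_set (\<lambda>i. cmod (x i) + cmod (y i)) F"
      by (rule L2_set_mono) (auto intro: norm_triangle_ineq)
    also have "\<dots> \<le> L2_set (\<lambda>i. cmod (x i)) F + L2_set (\<lambda>i. cmod (y i)) F"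
      by (rule L2_set_triangle_ineq)
    also have "\<dots> \<le> l2norm x + l2norm y"
      by (intro add_mono L2_set_le sx sy F)
    finally have "L2_set (\<lambda>i. cmod (x i + y i)) F \<le> l2norm x + l2norm y" .
    then show ?thesis
      unfolding L2_set_def by (rule sqrt_le_D)
  qed
  have "(\<Sum>\<^sub>\<infinity>i. (cmod (x i + y i))\<^sup>2) \<le> (l2norm x + l2norm y)\<^sup>2"
    by (rule infsum_le_finite_sums[OF sxy]) (simp add: partial_sums)
  thus ?thesis
    unfolding l2norm_def[of "\<lambda>i. x i + y i"] by (simp add: real_le_lsqrt)
qed

definition l2_basis :: "'i \<Rightarrow> 'i \<Rightarrow> complex" where
  "l2_basis j = (\<lambda>i. if i = j then 1 else 0)"

lemma l2_basis_in_l2: "l2_basis j \<in> l2"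
proof -
  have "(\<lambda>i. (cmod (l2_basis j i))\<^sup>2) summable_on UNIV \<longleftrightarrow>
        (\<lambda>i. (cmod (l2_basis j i))\<^sup>2) summable_on {j}"
    by (rule summable_on_cong_neutral) (auto simp: l2_basis_def)
  thus ?thesis unfolding l2_def by (simp add: summable_on_finite)
qed

lemma l2_basis_nonzero: "l2_basis j \<noteq> (\<lambda>i. 0)"
  by (metis l2_basis_def one_neq_zero)

lemma cinner_l2_basis: "cinner (l2_basis j) y = y j"
proof -
  have "cinner (l2_basis j) y = (\<Sum>\<^sub>\<infinity>i\<in>{j}. cnj (l2_basis j i) * y i)"
    unfolding cinner_def by (rule infsum_cong_neutral) (auto simp: l2_basis_def)
  thus ?thesis by (simp add: l2_basis_def)
qed

definition op_plus :: "'i op \<Rightarrow> 'i op \<Rightarrow> 'i op" where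
  "op_plus S T = (\<lambda>x i. S x i + T x i)"

definition op_scale :: "complex \<Rightarrow> 'i op \<Rightarrow> 'i op" where
  "op_scale c S = (\<lambda>x i. c * S x i)"

lemma zeroop_eq: "zeroop = (\<lambda>x i. 0)"
  by (rule ext) (simp add: zeroop_def)

lemma op_plus_zeroop [simp]: "op_plus zeroop zeroop = zeroop"
  by (simp add: op_plus_def zeroop_eq)

lemma op_diff_zeroop [simp]: "op_diff zeroop zeroop = zeroop"
  by (simp add: op_diff_def zeroop_eq)

lemma comp_zeroop_left [simp]: "zeroop \<circ> T = zeroop"
  by (rule ext) (simp add: zeroop_def)

lemma op_scale_zeroop [simp]: "op_scale c zeroop = zeroop"
  by (simp add: op_scale_def zeroop_eq)

lemma op_scale_one [simp]: "op_scale 1 S = S"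
  by (simp add: op_scale_def)

lemma op_scale_scale: "op_scale a (op_scale b S) = op_scale (a * b) S"
  by (simp add: op_scale_def mult.assoc)

lemma op_plus_comp: "op_plus S T \<circ> Z = op_plus (S \<circ> Z) (T \<circ> Z)"
  by (simp add: op_plus_def o_def)

lemma op_diff_comp: "op_diff S T \<circ> Z = op_diff (S \<circ> Z) (T \<circ> Z)"
  by (simp add: op_diff_def o_def)

lemma op_scale_comp: "op_scale c S \<circ> Z = op_scale c (S \<circ> Z)"
  by (simp add: op_scale_def o_def)

lemma bounded_op_l2: "T \<in> bounded_ops \<Longrightarrow> T x \<in> l2"
  unfolding bounded_ops_def by (cases "x \<in> l2") auto

lemma bounded_op_outside_l2: "T \<in> bounded_ops \<Longrightarrow> x \<notin> l2 \<Longrightarrow> T x = (\<lambda>i. 0)"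
  unfolding bounded_ops_def by auto

lemma bounded_op_lincomb: "T \<in> bounded_ops \<Longrightarrow> x \<in> l2 \<Longrightarrow> y \<in> l2 \<Longrightarrow>
   T (\<lambda>i. c * x i + y i) = (\<lambda>i. c * T x i + T y i)"
  unfolding bounded_ops_def by blast

lemma bounded_op_zero: assumes "T \<in> bounded_ops" shows "T (\<lambda>i. 0) = (\<lambda>i. 0)"
proof -
  have "T (\<lambda>i. 1 * 0 + 0) = (\<lambda>i. 1 * T (\<lambda>i. 0) i + T (\<lambda>i. 0) i)"
    by (rule bounded_op_lincomb[OF assms]) auto
  thus ?thesis by (simp add: fun_eq_iff)
qed

lemma bounded_op_add: "T \<in> bounded_ops \<Longrightarrow> x \<in> l2 \<Longrightarrow> y \<in> l2 \<Longrightarrow>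
   T (\<lambda>i. x i + y i) = (\<lambda>i. T x i + T y i)"
  using bounded_op_lincomb[of T x y 1] by simp

lemma bounded_op_diff: "T \<in> bounded_ops \<Longrightarrow> x \<in> l2 \<Longrightarrow> y \<in> l2 \<Longrightarrow>
   T (\<lambda>i. x i - y i) = (\<lambda>i. T x i - T y i)"
  using bounded_op_lincomb[of T y x "-1"] by simp

lemma bounded_op_scale: "T \<in> bounded_ops \<Longrightarrow> x \<in> l2 \<Longrightarrow> T (\<lambda>i. c * x i) = (\<lambda>i. c * T x i)"
  using bounded_op_lincomb[of T x "\<lambda>i. 0" c] bounded_op_zero[of T] by simp

lemma comp_idop_left: "T \<in> bounded_ops \<Longrightarrow> idop \<circ> T = T"
  by (rule ext) (simp add: idop_def bounded_op_l2)

lemma comp_idop_right: "T \<in> bounded_ops \<Longrightarrow> T \<circ> idop = T"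
  by (rule ext) (simp add: idop_def bounded_op_zero bounded_op_outside_l2)

lemma comp_zeroop_right: "T \<in> bounded_ops \<Longrightarrow> T \<circ> zeroop = zeroop"
  by (rule ext) (simp add: zeroop_def bounded_op_zero)

lemma comp_op_plus_right: "S \<in> bounded_ops \<Longrightarrow> A \<in> bounded_ops \<Longrightarrow> B \<in> bounded_ops \<Longrightarrow>
  S \<circ> op_plus A B = op_plus (S \<circ> A) (S \<circ> B)"
  by (rule ext) (simp add: op_plus_def bounded_op_add bounded_op_l2)

lemma comp_op_diff_right: "S \<in> bounded_ops \<Longrightarrow> A \<in> bounded_ops \<Longrightarrow> B \<in> bounded_ops \<Longrightarrow>
  S \<circ> op_diff A B = op_diff (S \<circ> A) (S \<circ> B)"
  by (rule ext) (simp add: op_diff_def bounded_op_diff bounded_op_l2)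

lemma comp_op_scale_right: "S \<in> bounded_ops \<Longrightarrow> A \<in> bounded_ops \<Longrightarrow>
  S \<circ> op_scale c A = op_scale c (S \<circ> A)"
  by (rule ext) (simp add: op_scale_def bounded_op_scale bounded_op_l2)

lemma comp_sum_right:
  assumes S: "S \<in> bounded_ops" and F: "finite F" and A: "\<And>l. l \<in> F \<Longrightarrow> A l \<in> bounded_ops"
  shows "S \<circ> (\<lambda>x i. \<Sum>l\<in>F. A l x i) = (\<lambda>x i. \<Sum>l\<in>F. S (A l x) i)"
  using F A
proof (induction F rule: finite_induct)
  case empty
  then show ?case using bounded_op_zero[OF S] by (simp add: o_def)
next
  case (insert a F)
  have in_l2: "(\<lambda>i. \<Sum>l\<in>F. A l x i) \<in> l2" for x
    using insert by (intro l2_sum) (simp_all add: bounded_op_l2)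
  have "S (\<lambda>i. A a x i + (\<Sum>l\<in>F. A l x i)) =
        (\<lambda>i. S (A a x) i + S (\<lambda>i. \<Sum>l\<in>F. A l x i) i)" for x
    using bounded_op_add[OF S bounded_op_l2 in_l2] insert.prems by simp
  then show ?case using insert by (simp add: fun_eq_iff)
qed

lemma zeroop_bounded: "zeroop \<in> bounded_ops"
  unfolding bounded_ops_def zeroop_def by (auto intro!: exI[of _ 0])

lemma idop_bounded: "idop \<in> bounded_ops"
  unfolding bounded_ops_def idop_def by (auto simp: l2_lincomb intro!: exI[of _ 1])

lemma idop_neq_zeroop: "(idop :: 'i op) \<noteq> zeroop"
proof
  assume "(idop :: 'i op) = zeroop"
  then have "idop (l2_basis (undefined :: 'i)) = zeroop (l2_basis undefined)" by simp
  then show False using l2_basis_nonzero[of "undefined :: 'i"] by (simp add: idop_def zeroop_def l2_basis_in_l2)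
qed

lemma op_scale_bounded:
  assumes T: "T \<in> bounded_ops"
  shows "op_scale c T \<in> bounded_ops"
proof -
  obtain K where K: "\<forall>x\<in>l2. l2norm (T x) \<le> K * l2norm x"
    using T unfolding bounded_ops_def by blast
  have "\<forall>x\<in>l2. l2norm (op_scale c T x) \<le> (cmod c * K) * l2norm x"
    using mult_left_mono[OF K[rule_format] norm_ge_zero[of c]]
    by (simp add: op_scale_def l2norm_scale mult.assoc)
  then show ?thesis unfolding bounded_ops_def mem_Collect_eq
  proof (intro conjI)
    show "\<forall>x\<in>l2. \<forall>y\<in>l2. \<forall>d. op_scale c T (\<lambda>i. d * x i + y i) =
      (\<lambda>i. d * op_scale c T x i + op_scale c T y i)"
      using T by (simp add: op_scale_def bounded_op_lincomb distrib_left mult.left_commute)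
  qed (use T in \<open>auto simp: op_scale_def l2_scale bounded_op_l2 bounded_op_outside_l2\<close>)
qed

lemma opnorm_bdd_above:
  assumes "T \<in> bounded_ops"
  shows "bdd_above ((\<lambda>x. l2norm (T x)) ` {x\<in>l2. l2norm x \<le> 1})"
proof -
  obtain K where K: "\<forall>x\<in>l2. l2norm (T x) \<le> K * l2norm x"
    using assms unfolding bounded_ops_def by blast
  have "l2norm (T x) \<le> \<bar>K\<bar>" if "x \<in> l2" "l2norm x \<le> 1" for x
  proof -
    have "l2norm (T x) \<le> K * l2norm x" using K that by blast
    also have "\<dots> \<le> \<bar>K\<bar> * l2norm x" by (simp add: mult_right_mono)
    also have "\<dots> \<le> \<bar>K\<bar>" using that by (simp add: mult_left_le)
    finally show ?thesis .
  qed
  thus ?thesis by (intro bdd_aboveI2[where M="\<bar>K\<bar>"]) auto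
qed

lemma l2norm_le_opnorm:
  "T \<in> bounded_ops \<Longrightarrow> x \<in> l2 \<Longrightarrow> l2norm x \<le> 1 \<Longrightarrow> l2norm (T x) \<le> opnorm T"
  unfolding opnorm_def by (rule cSUP_upper[OF _ opnorm_bdd_above]) auto

lemma opnorm_nonneg: "T \<in> bounded_ops \<Longrightarrow> 0 \<le> opnorm T"
  using l2norm_le_opnorm[of T "\<lambda>i. 0"] by (simp add: bounded_op_zero)

lemma l2norm_apply_le:
  assumes T: "T \<in> bounded_ops" and x: "x \<in> l2"
  shows "l2norm (T x) \<le> opnorm T * l2norm x"
proof (cases "l2norm x = 0")
  case True
  then show ?thesis using l2norm_eq_0[OF x] bounded_op_zero[OF T] by simp
next
  case False
  then have pos: "l2norm x > 0" using l2norm_nonneg[of x] by linarith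
  let ?c = "complex_of_real (1 / l2norm x)"
  have "l2norm (\<lambda>i. ?c * x i) = 1"
    unfolding l2norm_scale using pos by (simp add: norm_divide)
  then have "l2norm (T (\<lambda>i. ?c * x i)) \<le> opnorm T"
    by (intro l2norm_le_opnorm[OF T l2_scale[OF x]]) simp
  moreover have "l2norm (T (\<lambda>i. ?c * x i)) = l2norm (T x) / l2norm x"
    unfolding bounded_op_scale[OF T x] l2norm_scale using pos by (simp add: norm_divide)
  ultimately have "l2norm (T x) / l2norm x \<le> opnorm T" by simp
  thus ?thesis using pos by (simp add: divide_le_eq mult.commute)
qed

lemma opnorm_le:
  fixes T :: "'i op"
  assumes "\<And>x. x \<in> l2 \<Longrightarrow> l2norm (T x) \<le> K * l2norm x" and "0 \<le> K"
  shows "opnorm T \<le> K"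
  unfolding opnorm_def
proof (rule cSUP_least)
  show "{x\<in>l2. l2norm x \<le> 1} \<noteq> {}" using l2_zero by fastforce
next
  fix x :: "'i \<Rightarrow> complex" assume "x \<in> {x\<in>l2. l2norm x \<le> 1}"
  then show "l2norm (T x) \<le> K"
    using assms mult_left_le[of "l2norm x" K] order_trans by fastforce
qed

lemma opnorm_zeroop [simp]: "opnorm (zeroop :: 'i op) = 0"
proof -
  have "opnorm (zeroop :: 'i op) \<le> 0" by (rule opnorm_le) (simp_all add: zeroop_def)
  then show ?thesis by (intro antisym opnorm_nonneg zeroop_bounded)
qed

lemma opnorm_op_plus_le:
  fixes S T :: "'i op"
  assumes S: "S \<in> bounded_ops" and T: "T \<in> bounded_ops"
  shows "opnorm (op_plus S T) \<le> opnorm S + opnorm T"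
proof (rule opnorm_le)
  fix x :: "'i \<Rightarrow> complex" assume x: "x \<in> l2"
  have "l2norm (op_plus S T x) \<le> l2norm (S x) + l2norm (T x)"
    unfolding op_plus_def by (rule l2norm_triangle[OF bounded_op_l2[OF S] bounded_op_l2[OF T]])
  also have "\<dots> \<le> opnorm S * l2norm x + opnorm T * l2norm x"
    by (intro add_mono l2norm_apply_le S T x)
  finally show "l2norm (op_plus S T x) \<le> (opnorm S + opnorm T) * l2norm x"
    by (simp add: algebra_simps)
qed (simp add: opnorm_nonneg S T)

lemma opnorm_comp_le:
  fixes S T :: "'i op"
  assumes S: "S \<in> bounded_ops" and T: "T \<in> bounded_ops"
  shows "opnorm (S \<circ> T) \<le> opnorm S * opnorm T"
proof (rule opnorm_le)
  fix x :: "'i \<Rightarrow> complex" assume x: "x \<in> l2"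
  have "l2norm ((S \<circ> T) x) \<le> opnorm S * l2norm (T x)"
    using l2norm_apply_le[OF S bounded_op_l2[OF T]] by simp
  also have "\<dots> \<le> opnorm S * (opnorm T * l2norm x)"
    by (intro mult_left_mono l2norm_apply_le T x opnorm_nonneg S)
  finally show "l2norm ((S \<circ> T) x) \<le> opnorm S * opnorm T * l2norm x"
    by (simp add: algebra_simps)
qed (simp add: opnorm_nonneg S T)

lemma opnorm_op_scale_le:
  fixes T :: "'i op"
  assumes T: "T \<in> bounded_ops"
  shows "opnorm (op_scale c T) \<le> cmod c * opnorm T"
proof (rule opnorm_le)
  fix x :: "'i \<Rightarrow> complex" assume x: "x \<in> l2"
  have "l2norm (op_scale c T x) = cmod c * l2norm (T x)"
    unfolding op_scale_def by (simp add: l2norm_scale)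
  also have "\<dots> \<le> cmod c * (opnorm T * l2norm x)"
    by (intro mult_left_mono l2norm_apply_le T x) simp
  finally show "l2norm (op_scale c T x) \<le> cmod c * opnorm T * l2norm x"
    by (simp add: algebra_simps)
qed (simp add: opnorm_nonneg T)

lemma opnorm_op_diff_le:
  assumes S: "S \<in> bounded_ops" and T: "T \<in> bounded_ops"
  shows "opnorm (op_diff S T) \<le> opnorm S + opnorm T"
proof -
  have "op_diff S T = op_plus S (op_scale (-1) T)"
    by (simp add: op_diff_def op_plus_def op_scale_def)
  then show ?thesis
    using opnorm_op_plus_le[OF S op_scale_bounded[OF T, of "-1"]] opnorm_op_scale_le[OF T, of "-1"]
    by simp
qed

lemma opnorm_pos:
  assumes T: "T \<in> bounded_ops" and x: "x \<in> l2" and nz: "T x \<noteq> (\<lambda>i. 0)"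
  shows "0 < opnorm T"
proof (rule ccontr)
  assume "\<not> 0 < opnorm T"
  then have "l2norm (T x) = 0"
    using opnorm_nonneg[OF T] l2norm_apply_le[OF T x] l2norm_nonneg[of "T x"] by simp
  then show False using l2norm_eq_0[OF bounded_op_l2[OF T]] nz by blast
qed

lemma adj_unique:
  assumes S: "S \<in> bounded_ops" and adjoint: "is_adjoint T S"
  shows "adj T = S"
  unfolding adj_def
proof (rule the_equality)
  show "S \<in> bounded_ops \<and> is_adjoint T S" using S adjoint by blast
next
  fix S' assume S': "S' \<in> bounded_ops \<and> is_adjoint T S'"
  show "S' = S"
  proof
    fix y
    show "S' y = S y"
    proof (cases "y \<in> l2")
      case True
      show ?thesis
      proof
        fix j
        have "S' y j = cinner (T (l2_basis j)) y"
          using S' True l2_basis_in_l2 unfolding is_adjoint_def by (metis cinner_l2_basis)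
        also have "\<dots> = S y j"
          using adjoint True l2_basis_in_l2 unfolding is_adjoint_def by (metis cinner_l2_basis)
        finally show "S' y j = S y j" .
      qed
    next
      case False
      then show ?thesis using S S' by (simp add: bounded_op_outside_l2)
    qed
  qed
qed

lemma is_adjoint_scalar: "is_adjoint (op_scale c idop) (op_scale (cnj c) idop)"
  unfolding is_adjoint_def
proof (intro ballI)
  fix x y :: "'i \<Rightarrow> complex" assume x: "x \<in> l2" and y: "y \<in> l2"
  have "cinner (op_scale c idop x) y = (\<Sum>\<^sub>\<infinity>i. cnj c * (cnj (x i) * y i))"
    using x unfolding cinner_def by (simp add: op_scale_def idop_def mult.assoc)
  also have "\<dots> = cinner x (op_scale (cnj c) idop y)"
    using y unfolding cinner_def by (simp add: op_scale_def idop_def ac_simps)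
  finally show "cinner (op_scale c idop x) y = cinner x (op_scale (cnj c) idop y)" .
qed

lemma op_scale_idop_comp: "op_scale a (idop :: 'i op) \<circ> op_scale b idop = op_scale (a * b) idop"
  by (simp add: op_scale_comp op_scale_scale comp_idop_left op_scale_bounded idop_bounded)

lemma symmetry_square: "S \<in> symmetries R \<Longrightarrow> S \<circ> S = idop"
  unfolding symmetries_def unitaries_def by auto

locale von_neumann =
  fixes R :: "'i op set"
  assumes von_neumann_algebra: "von_neumann_algebra R"
begin

lemma bounded: "X \<in> R \<Longrightarrow> X \<in> bounded_ops"
  using von_neumann_algebra unfolding von_neumann_algebra_def by blast

lemma idop_in: "idop \<in> R"
  using von_neumann_algebra unfolding von_neumann_algebra_def by blast

lemma comp_in: "X \<in> R \<Longrightarrow> Y \<in> R \<Longrightarrow> X \<circ> Y \<in> R"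
  using von_neumann_algebra unfolding von_neumann_algebra_def by blast

lemma adj_in: "X \<in> R \<Longrightarrow> adj X \<in> R"
  using von_neumann_algebra unfolding von_neumann_algebra_def by blast

lemma lincomb_in: "X \<in> R \<Longrightarrow> Y \<in> R \<Longrightarrow> (\<lambda>x i. c * X x i + Y x i) \<in> R"
  using von_neumann_algebra unfolding von_neumann_algebra_def by blast

lemma op_plus_in: "X \<in> R \<Longrightarrow> Y \<in> R \<Longrightarrow> op_plus X Y \<in> R"
  using lincomb_in[of X Y 1] by (simp add: op_plus_def)

lemma op_diff_in: "X \<in> R \<Longrightarrow> Y \<in> R \<Longrightarrow> op_diff X Y \<in> R"
  using lincomb_in[of Y X "-1"] by (simp add: op_diff_def)

lemma zeroop_in: "zeroop \<in> R"
  using op_diff_in[OF idop_in idop_in] by (simp add: op_diff_def zeroop_eq)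

lemma op_scale_in: "X \<in> R \<Longrightarrow> op_scale c X \<in> R"
  using lincomb_in[OF _ zeroop_in, of X c] by (simp add: op_scale_def zeroop_eq)

lemma scalar_unitary:
  assumes "cnj c * c = 1"
  shows "op_scale c idop \<in> unitaries R"
proof -
  have "adj (op_scale c (idop :: 'i op)) = op_scale (cnj c) idop"
    by (rule adj_unique[OF op_scale_bounded[OF idop_bounded] is_adjoint_scalar])
  then show ?thesis
    unfolding unitaries_def using assms op_scale_in[OF idop_in]
    by (simp add: op_scale_idop_comp mult.commute)
qed

end

section \<open>Determinants over a seminormed commutative ring\<close>

locale ring_seminorm =
  fixes N :: "'a::comm_ring_1 \<Rightarrow> real"
  assumes nonneg: "0 \<le> N x"
    and zero: "N 0 = 0"
    and add: "N (x + y) \<le> N x + N y"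
    and mult: "N (x * y) \<le> N x * N y"
    and minus: "N (- x) \<le> N x"
begin

lemma sum_le: "N (sum f F) \<le> (\<Sum>i\<in>F. N (f i))"
proof (induction F rule: infinite_finite_induct)
  case (insert i F)
  then show ?case using add[of "f i" "sum f F"] by simp
qed (simp_all add: zero)

lemma sign_mult_le: "N (of_int (sign p) * x) \<le> N x"
  using minus[of x] by (cases "sign p = 1") (auto simp: sign_def)

lemma diff_squares_le: "N (x\<^sup>2 - y\<^sup>2) \<le> N (x - y) * (N x + N y)"
proof -
  have "x\<^sup>2 - y\<^sup>2 = (x - y) * (x + y)" by (simp add: power2_eq_square algebra_simps)
  then have "N (x\<^sup>2 - y\<^sup>2) \<le> N (x - y) * N (x + y)" using mult by simp
  also have "\<dots> \<le> N (x - y) * (N x + N y)" by (intro mult_left_mono add nonneg)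
  finally show ?thesis .
qed

lemma prod_le:
  assumes "finite F" "F \<noteq> {}" "\<And>i. i \<in> F \<Longrightarrow> N (a i) \<le> K"
  shows "N (prod a F) \<le> K ^ card F"
  using assms
proof (induction F rule: finite_ne_induct)
  case (insert i F)
  have K: "0 \<le> K" using insert.prems nonneg order_trans by blast
  have "N (a i * prod a F) \<le> N (a i) * N (prod a F)" by (rule mult)
  also have "\<dots> \<le> K * K ^ card F"
    using insert by (intro mult_mono nonneg K) auto
  finally show ?case using insert.hyps by simp
qed simp

lemma prod_diff_le:
  assumes "finite F" "F \<noteq> {}"
    and "\<And>i. i \<in> F \<Longrightarrow> N (a i) \<le> K" "\<And>i. i \<in> F \<Longrightarrow> N (b i) \<le> K"
    and "\<And>i. i \<in> F \<Longrightarrow> N (a i - b i) \<le> e"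
  shows "N (prod a F - prod b F) \<le> real (card F) * K ^ (card F - 1) * e"
  using assms
proof (induction F rule: finite_ne_induct)
  case (insert i F)
  define m where "m = card F"
  have m: "m \<ge> 1" using insert.hyps card_0_eq unfolding m_def by fastforce
  have K: "0 \<le> K" and e: "0 \<le> e" using insert.prems nonneg order_trans by blast+
  let ?A = "prod a F" and ?B = "prod b F"
  have "a i * ?A - b i * ?B = a i * (?A - ?B) + (a i - b i) * ?B"
    by (simp add: algebra_simps)
  then have "N (a i * ?A - b i * ?B) \<le> N (a i * (?A - ?B)) + N ((a i - b i) * ?B)"
    using add by simp
  also have "\<dots> \<le> N (a i) * N (?A - ?B) + N (a i - b i) * N ?B"
    by (intro add_mono mult)
  also have "\<dots> \<le> K * (real m * K ^ (m - 1) * e) + e * K ^ m"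
  proof (intro add_mono mult_mono nonneg K e)
    show "N (?A - ?B) \<le> real m * K ^ (m - 1) * e" using insert unfolding m_def by simp
    show "N ?B \<le> K ^ m" using insert prod_le[of F b K] unfolding m_def by simp
  qed (use insert.prems in simp_all)
  also have "\<dots> = (1 + real m) * K ^ m * e"
    using m by (cases m) (simp_all add: algebra_simps)
  finally show ?case using insert.hyps unfolding m_def by simp
qed simp

lemma det_le:
  assumes A: "A \<in> carrier_mat n n" and n: "0 < n"
    and entries: "\<And>j k. j < n \<Longrightarrow> k < n \<Longrightarrow> N (A $$ (j, k)) \<le> K"
  shows "N (Determinant.det A) \<le> fact n * K ^ n"
proof -
  have "N (Determinant.det A)
      \<le> (\<Sum>p | p permutes {0..<n}. N (of_int (sign p) * (\<Prod>i = 0..<n. A $$ (i, p i))))"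
    unfolding det_def'[OF A] by (rule sum_le)
  also have "\<dots> \<le> (\<Sum>p | p permutes {0..<n}. K ^ n)"
  proof (rule sum_mono)
    fix p assume "p \<in> {p. p permutes {0..<n}}"
    then have "N (\<Prod>i = 0..<n. A $$ (i, p i)) \<le> K ^ n"
      using prod_le[of "{0..<n}" "\<lambda>i. A $$ (i, p i)" K] n entries permutes_in_image
      by simp
    then show "N (of_int (sign p) * (\<Prod>i = 0..<n. A $$ (i, p i))) \<le> K ^ n"
      using sign_mult_le order_trans by blast
  qed
  also have "\<dots> = fact n * K ^ n" by (simp add: card_permutations)
  finally show ?thesis .
qed

lemma det_diff_le:
  assumes A: "A \<in> carrier_mat n n" and B: "B \<in> carrier_mat n n" and n: "0 < n"
    and "\<And>j k. j < n \<Longrightarrow> k < n \<Longrightarrow> N (A $$ (j, k)) \<le> K"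
    and "\<And>j k. j < n \<Longrightarrow> k < n \<Longrightarrow> N (B $$ (j, k)) \<le> K"
    and "\<And>j k. j < n \<Longrightarrow> k < n \<Longrightarrow> N (A $$ (j, k) - B $$ (j, k)) \<le> e"
  shows "N (Determinant.det A - Determinant.det B) \<le> fact n * (real n * K ^ (n - 1) * e)"
proof -
  let ?a = "\<lambda>p. \<Prod>i = 0..<n. A $$ (i, p i)" and ?b = "\<lambda>p. \<Prod>i = 0..<n. B $$ (i, p i)"
  have "Determinant.det A - Determinant.det B
      = (\<Sum>p | p permutes {0..<n}. of_int (sign p) * (?a p - ?b p))"
    unfolding det_def'[OF A] det_def'[OF B]
    by (simp add: sum_subtractf[symmetric] right_diff_distrib)
  then have "N (Determinant.det A - Determinant.det B)
      \<le> (\<Sum>p | p permutes {0..<n}. N (of_int (sign p) * (?a p - ?b p)))"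
    using sum_le by simp
  also have "\<dots> \<le> (\<Sum>p | p permutes {0..<n}. real n * K ^ (n - 1) * e)"
  proof (rule sum_mono)
    fix p assume "p \<in> {p. p permutes {0..<n}}"
    then have "N (?a p - ?b p) \<le> real n * K ^ (n - 1) * e"
      using prod_diff_le[of "{0..<n}" "\<lambda>i. A $$ (i, p i)" K "\<lambda>i. B $$ (i, p i)" e]
        n assms(4-6) permutes_in_image by simp
    then show "N (of_int (sign p) * (?a p - ?b p)) \<le> real n * K ^ (n - 1) * e"
      using sign_mult_le order_trans by blast
  qed
  also have "\<dots> = fact n * (real n * K ^ (n - 1) * e)" by (simp add: card_permutations)
  finally show ?thesis .
qed

end

section \<open>A ring type for commutative operator algebras\<close>

definition comm_op_ring :: "'i op set \<Rightarrow> 'i op \<Rightarrow> bool" where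
  "comm_op_ring A u \<longleftrightarrow> u \<in> A \<and> zeroop \<in> A \<and> (\<forall>a\<in>A. u \<circ> a = a) \<and>
     (\<forall>a\<in>A. \<forall>b\<in>A. op_plus a b \<in> A \<and> op_diff a b \<in> A \<and> a \<circ> b \<in> A \<and> a \<circ> b = b \<circ> a)"

text \<open>The determinant of Jordan_Normal_Form needs a type of class comm_ring_1, whereas the
  commutative algebra it will be applied to is a set of operators depending on the von Neumann
  algebra.  We therefore take the product of all commutative operator rings \<open>(A, u)\<close>, indexed by
  themselves; the ring we want is recovered as a coordinate projection.\<close>

lemma comm_op_ring_zeroop: "comm_op_ring A u \<Longrightarrow> zeroop \<in> A"
  unfolding comm_op_ring_def by blast

typedef 'i op_ring = "{f :: 'i op set \<times> 'i op \<Rightarrow> 'i op.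
    \<forall>A u. f (A, u) \<in> (if comm_op_ring A u then A else {zeroop})}"
  by (rule exI[of _ "\<lambda>_. zeroop"]) (simp add: comm_op_ring_def)

lemma Rep_op_ring_in: "comm_op_ring A u \<Longrightarrow> Rep_op_ring f (A, u) \<in> A"
  using Rep_op_ring[of f] by (auto split: if_splits)

lemma Rep_op_ring_outside: "\<not> comm_op_ring A u \<Longrightarrow> Rep_op_ring f (A, u) = zeroop"
  using Rep_op_ring[of f] by (auto split: if_splits)

lemma Rep_Abs_op_ring:
  assumes "\<And>A u. comm_op_ring A u \<Longrightarrow> g (A, u) \<in> A"
    and "\<And>A u. \<not> comm_op_ring A u \<Longrightarrow> g (A, u) = zeroop"
  shows "Rep_op_ring (Abs_op_ring g) = g"
  using assms by (intro Abs_op_ring_inverse) auto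

lemma Rep_Abs_op_ring_pointwise:
  assumes "\<And>A u a b. comm_op_ring A u \<Longrightarrow> a \<in> A \<Longrightarrow> b \<in> A \<Longrightarrow> h a b \<in> A"
    and "h zeroop zeroop = zeroop"
  shows "Rep_op_ring (Abs_op_ring (\<lambda>k. h (Rep_op_ring f k) (Rep_op_ring g k)))
    = (\<lambda>k. h (Rep_op_ring f k) (Rep_op_ring g k))"
  using assms by (intro Rep_Abs_op_ring) (simp_all add: Rep_op_ring_in Rep_op_ring_outside)

lemma op_ring_eqI:
  "(\<And>A u. comm_op_ring A u \<Longrightarrow> Rep_op_ring f (A, u) = Rep_op_ring g (A, u)) \<Longrightarrow> f = g"
  by (metis Rep_op_ring_inject Rep_op_ring_outside surj_pair ext)

lemma comm_op_ring_scalars: "comm_op_ring (range (\<lambda>c. op_scale c (idop :: 'i op))) idop"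
  unfolding comm_op_ring_def
proof (intro conjI ballI)
  show "idop \<in> range (\<lambda>c. op_scale c idop)" using op_scale_one by (metis rangeI)
  show "zeroop \<in> range (\<lambda>c. op_scale c idop)"
    by (rule range_eqI[of _ _ 0]) (simp add: op_scale_def zeroop_eq)
next
  fix a b :: "'i op" assume "a \<in> range (\<lambda>c. op_scale c idop)" "b \<in> range (\<lambda>c. op_scale c idop)"
  then obtain c d where a: "a = op_scale c idop" and b: "b = op_scale d idop" by blast
  show "op_plus a b \<in> range (\<lambda>c. op_scale c idop)"
    by (rule range_eqI[of _ _ "c + d"]) (simp add: a b op_plus_def op_scale_def algebra_simps)
  show "op_diff a b \<in> range (\<lambda>c. op_scale c idop)"
    by (rule range_eqI[of _ _ "c - d"]) (simp add: a b op_diff_def op_scale_def algebra_simps)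
  show "a \<circ> b \<in> range (\<lambda>c. op_scale c idop)"
    by (rule range_eqI[of _ _ "c * d"]) (simp add: a b op_scale_idop_comp)
  show "a \<circ> b = b \<circ> a" by (simp add: a b op_scale_idop_comp mult.commute)
next
  fix a :: "'i op" assume "a \<in> range (\<lambda>c. op_scale c idop)"
  then show "idop \<circ> a = a" by (auto simp: comp_idop_left op_scale_bounded idop_bounded)
qed

instantiation op_ring :: (type) comm_ring_1
begin

definition zero_op_ring_def: "0 = Abs_op_ring (\<lambda>k. zeroop)"
definition one_op_ring_def: "1 = Abs_op_ring (\<lambda>(A, u). if comm_op_ring A u then u else zeroop)"
definition plus_op_ring_def:
  "f + g = Abs_op_ring (\<lambda>k. op_plus (Rep_op_ring f k) (Rep_op_ring g k))"
definition times_op_ring_def: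
  "f * g = Abs_op_ring (\<lambda>k. Rep_op_ring f k \<circ> Rep_op_ring g k)"
definition minus_op_ring_def:
  "f - g = Abs_op_ring (\<lambda>k. op_diff (Rep_op_ring f k) (Rep_op_ring g k))"
definition uminus_op_ring_def:
  "- f = Abs_op_ring (\<lambda>k. op_diff zeroop (Rep_op_ring f k))"

lemma Rep_op_ring_zero: "Rep_op_ring 0 k = zeroop"
  unfolding zero_op_ring_def by (subst Rep_Abs_op_ring) (simp_all add: comm_op_ring_def)

lemma Rep_op_ring_one: "Rep_op_ring 1 (A, u) = (if comm_op_ring A u then u else zeroop)"
  unfolding one_op_ring_def by (subst Rep_Abs_op_ring) (auto simp: comm_op_ring_def)

lemma Rep_op_ring_plus: "Rep_op_ring (f + g) k = op_plus (Rep_op_ring f k) (Rep_op_ring g k)"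
  unfolding plus_op_ring_def by (subst Rep_Abs_op_ring_pointwise) (simp_all add: comm_op_ring_def)

lemma Rep_op_ring_times: "Rep_op_ring (f * g) k = Rep_op_ring f k \<circ> Rep_op_ring g k"
  unfolding times_op_ring_def by (subst Rep_Abs_op_ring_pointwise) (simp_all add: comm_op_ring_def)

lemma Rep_op_ring_minus: "Rep_op_ring (f - g) k = op_diff (Rep_op_ring f k) (Rep_op_ring g k)"
  unfolding minus_op_ring_def by (subst Rep_Abs_op_ring_pointwise) (simp_all add: comm_op_ring_def)

lemma Rep_op_ring_uminus: "Rep_op_ring (- f) k = op_diff zeroop (Rep_op_ring f k)"
  using Rep_Abs_op_ring_pointwise[of "\<lambda>_ b. op_diff zeroop b" f f]
  unfolding uminus_op_ring_def by (simp add: comm_op_ring_def)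

lemmas Rep_op_ring_simps = Rep_op_ring_zero Rep_op_ring_one Rep_op_ring_plus Rep_op_ring_times
  Rep_op_ring_minus Rep_op_ring_uminus

instance
proof
  fix a b c :: "'a op_ring"
  show "a * b * c = a * (b * c)"
    by (rule op_ring_eqI) (simp add: Rep_op_ring_simps o_assoc)
  show "a * b = b * a"
    by (rule op_ring_eqI) (simp add: Rep_op_ring_simps Rep_op_ring_in comm_op_ring_def)
  show "1 * a = a"
    by (rule op_ring_eqI) (simp add: Rep_op_ring_simps Rep_op_ring_in comm_op_ring_def)
  show "a + b + c = a + (b + c)"
    by (rule op_ring_eqI) (simp add: Rep_op_ring_simps op_plus_def add.assoc)
  show "a + b = b + a"
    by (rule op_ring_eqI) (simp add: Rep_op_ring_simps op_plus_def add.commute)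
  show "0 + a = a"
    by (rule op_ring_eqI) (simp add: Rep_op_ring_simps op_plus_def zeroop_eq)
  show "- a + a = 0"
    by (rule op_ring_eqI) (simp add: Rep_op_ring_simps op_plus_def op_diff_def zeroop_eq)
  show "a - b = a + - b"
    by (rule op_ring_eqI) (simp add: Rep_op_ring_simps op_plus_def op_diff_def zeroop_eq)
  show "(a + b) * c = a * c + b * c"
    by (rule op_ring_eqI) (simp add: Rep_op_ring_simps op_plus_def o_def)
  show "(0::'a op_ring) \<noteq> 1"
  proof
    let ?scalars = "(range (\<lambda>c. op_scale c idop), idop)"
    assume "(0::'a op_ring) = 1"
    then have "Rep_op_ring (0::'a op_ring) ?scalars = Rep_op_ring 1 ?scalars" by simp
    then show False
      using comm_op_ring_scalars[where 'i = 'a] idop_neq_zeroop[where 'i = 'a]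
      by (simp add: Rep_op_ring_zero Rep_op_ring_one)
  qed
qed

end

section \<open>Type I von Neumann algebras as matrix algebras\<close>

locale type_I_n_frame = von_neumann R for R :: "'i op set" +
  fixes n :: nat and E W :: "nat \<Rightarrow> 'i op"
  assumes n_pos: "0 < n"
    and abelian: "\<And>k. k < n \<Longrightarrow> abelian_projection R (E k)"
    and orthogonal: "\<And>j k. j < n \<Longrightarrow> k < n \<Longrightarrow> j \<noteq> k \<Longrightarrow> E j \<circ> E k = zeroop"
    and sum_E: "(\<lambda>x i. \<Sum>k<n. E k x i) = idop"
    and W_in: "\<And>k. k < n \<Longrightarrow> W k \<in> R"
    and adj_W_W: "\<And>k. k < n \<Longrightarrow> adj (W k) \<circ> W k = E 0"
    and W_adj_W: "\<And>k. k < n \<Longrightarrow> W k \<circ> adj (W k) = E k"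

lemma type_I_n_frame_exists:
  assumes "n \<ge> 1" and "type_I_n n R"
  shows "\<exists>E W. type_I_n_frame R n E W"
proof -
  have n: "0 < n" using assms(1) by simp
  obtain E where abelian: "\<forall>k<n. abelian_projection R (E k)"
    and orthogonal: "\<forall>j<n. \<forall>k<n. j \<noteq> k \<longrightarrow> E j \<circ> E k = zeroop"
    and equivalent: "\<forall>j<n. \<forall>k<n. mvn_equiv R (E j) (E k)"
    and sum_E: "(\<lambda>x i. \<Sum>k<n. E k x i) = idop"
    and vna: "von_neumann_algebra R"
    using assms(2) unfolding type_I_n_def by (elim conjE exE) blast
  have "\<forall>k. \<exists>V. k < n \<longrightarrow> V \<in> R \<and> adj V \<circ> V = E 0 \<and> V \<circ> adj V = E k"
    using equivalent n unfolding mvn_equiv_def by blast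
  from choice[OF this] obtain W
    where W: "\<forall>k. k < n \<longrightarrow> W k \<in> R \<and> adj (W k) \<circ> W k = E 0 \<and> W k \<circ> adj (W k) = E k"
    by blast
  have "type_I_n_frame R n E W"
  proof (intro type_I_n_frame.intro von_neumann.intro type_I_n_frame_axioms.intro)
    show "von_neumann_algebra R" by (rule vna)
    show "0 < n" by (rule n)
    show "(\<lambda>x i. \<Sum>k<n. E k x i) = idop" by (rule sum_E)
  qed (use abelian orthogonal W in blast)+
  then show ?thesis by blast
qed

context type_I_n_frame
begin

lemma E_in: "k < n \<Longrightarrow> E k \<in> R"
  using abelian unfolding abelian_projection_def is_projection_def by blast

lemma E_idem: "k < n \<Longrightarrow> E k \<circ> E k = E k"
  using abelian unfolding abelian_projection_def is_projection_def by blast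

lemma E0_in: "E 0 \<in> R"
  using E_in n_pos by blast

lemma E0_bounded: "E 0 \<in> bounded_ops"
  using bounded E0_in by blast

lemma E0_idem: "E 0 \<circ> E 0 = E 0"
  using E_idem n_pos by blast

lemma E0_absorb: "E 0 \<circ> (E 0 \<circ> Z) = E 0 \<circ> Z"
  using E0_idem by (metis comp_assoc)

lemma E0_corner_commute:
  "A \<in> R \<Longrightarrow> B \<in> R \<Longrightarrow>
    (E 0 \<circ> A \<circ> E 0) \<circ> (E 0 \<circ> B \<circ> E 0) = (E 0 \<circ> B \<circ> E 0) \<circ> (E 0 \<circ> A \<circ> E 0)"
  using abelian[OF n_pos] unfolding abelian_projection_def by blast

lemma W_E0_adj_W: "k < n \<Longrightarrow> W k \<circ> E 0 \<circ> adj (W k) = E k"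
  using adj_W_W W_adj_W E_idem by (metis comp_assoc)

lemma E0_adj_W: "k < n \<Longrightarrow> E 0 \<circ> adj (W k) = adj (W k) \<circ> E k"
  using adj_W_W W_adj_W by (metis comp_assoc)

lemma W_E0: "k < n \<Longrightarrow> W k \<circ> E 0 = E k \<circ> W k"
  using adj_W_W W_adj_W by (metis comp_assoc)

lemma E0_nonzero: "\<exists>x\<in>l2. E 0 x \<noteq> (\<lambda>i. 0)"
proof (rule ccontr)
  assume "\<not> (\<exists>x\<in>l2. E 0 x \<noteq> (\<lambda>i. 0))"
  then have "E 0 = zeroop"
    using bounded_op_outside_l2[OF bounded[OF E_in[OF n_pos]]] by (auto simp: zeroop_eq)
  then have "E k = zeroop" if "k < n" for k
    using W_E0_adj_W[OF that] comp_zeroop_right[OF bounded[OF W_in[OF that]]] by simp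
  then have "(\<lambda>x i. \<Sum>k<n. E k x i) = zeroop" by (simp add: zeroop_eq)
  then show False using sum_E idop_neq_zeroop[where 'i = 'i] by simp
qed

definition corner :: "'i op set" where
  "corner = {E 0 \<circ> X \<circ> E 0 | X. X \<in> R}"

lemma corner_subset: "a \<in> corner \<Longrightarrow> a \<in> R"
  unfolding corner_def using comp_in E_in[OF n_pos] by blast

lemma comm_op_ring_corner: "comm_op_ring corner (E 0)"
  unfolding comm_op_ring_def
proof (intro conjI ballI)
  have in_corner: "E 0 \<circ> X \<circ> E 0 \<in> corner" if "X \<in> R" for X
    using that unfolding corner_def by blast
  have "E 0 = E 0 \<circ> idop \<circ> E 0" using comp_idop_right[OF E0_bounded] E0_idem by simp
  then show "E 0 \<in> corner" using in_corner[OF idop_in] by simp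
  have "zeroop = E 0 \<circ> zeroop \<circ> E 0" using comp_zeroop_right[OF E0_bounded] by simp
  then show "zeroop \<in> corner" using in_corner[OF zeroop_in] by simp
  fix a b assume "a \<in> corner" "b \<in> corner"
  then obtain X Y where X: "X \<in> R" "a = E 0 \<circ> X \<circ> E 0" and Y: "Y \<in> R" "b = E 0 \<circ> Y \<circ> E 0"
    unfolding corner_def by blast
  have "op_plus a b = E 0 \<circ> op_plus X Y \<circ> E 0"
    using X Y by (simp add: comp_op_plus_right op_plus_comp bounded E0_bounded)
  then show "op_plus a b \<in> corner" using in_corner[OF op_plus_in[OF X(1) Y(1)]] by simp
  have "op_diff a b = E 0 \<circ> op_diff X Y \<circ> E 0"
    using X Y by (simp add: comp_op_diff_right op_diff_comp bounded E0_bounded)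
  then show "op_diff a b \<in> corner" using in_corner[OF op_diff_in[OF X(1) Y(1)]] by simp
  have "a \<circ> b = E 0 \<circ> (X \<circ> E 0 \<circ> Y) \<circ> E 0"
    using X Y by (simp add: comp_assoc E0_absorb)
  then show "a \<circ> b \<in> corner" using in_corner[OF comp_in[OF comp_in[OF X(1) E0_in] Y(1)]] by simp
  show "a \<circ> b = b \<circ> a" using X Y E0_corner_commute by blast
next
  fix a assume "a \<in> corner"
  then show "E 0 \<circ> a = a" unfolding corner_def by (auto simp: comp_assoc E0_absorb)
qed

definition entry :: "nat \<Rightarrow> nat \<Rightarrow> 'i op \<Rightarrow> 'i op" where
  "entry j k X = (E 0 \<circ> adj (W j)) \<circ> X \<circ> (W k \<circ> E 0)"

lemma left_factor_in: "j < n \<Longrightarrow> E 0 \<circ> adj (W j) \<in> R"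
  using comp_in[OF E0_in adj_in[OF W_in]] .

lemma right_factor_in: "k < n \<Longrightarrow> W k \<circ> E 0 \<in> R"
  using comp_in[OF W_in E0_in] .

lemma entry_in_corner: "j < n \<Longrightarrow> k < n \<Longrightarrow> X \<in> R \<Longrightarrow> entry j k X \<in> corner"
  unfolding corner_def entry_def
  by (rule CollectI, rule exI[of _ "adj (W j) \<circ> X \<circ> W k"])
     (simp add: comp_assoc comp_in adj_in W_in)

lemma entry_comp:
  assumes j: "j < n" and k: "k < n" and X: "X \<in> R" and Y: "Y \<in> R"
  shows "(\<lambda>x i. \<Sum>l<n. (entry j l X \<circ> entry l k Y) x i) = entry j k (X \<circ> Y)"
proof -
  define P where "P = E 0 \<circ> adj (W j) \<circ> X"
  define Q where "Q = Y \<circ> (W k \<circ> E 0)"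
  have P: "P \<in> bounded_ops"
    unfolding P_def using bounded comp_in left_factor_in[OF j] X by blast
  have "entry j l X \<circ> entry l k Y = P \<circ> E l \<circ> Q" if l: "l < n" for l
  proof -
    have "entry j l X \<circ> entry l k Y = P \<circ> (W l \<circ> E 0 \<circ> adj (W l)) \<circ> Q"
      unfolding entry_def P_def Q_def by (simp add: comp_assoc E0_absorb)
    then show ?thesis using W_E0_adj_W[OF l] by simp
  qed
  then have "(\<lambda>x i. \<Sum>l<n. (entry j l X \<circ> entry l k Y) x i) = (\<lambda>x i. \<Sum>l<n. P (E l (Q x)) i)"
    by (intro ext sum.cong) simp_all
  also have "\<dots> = (\<lambda>x. (P \<circ> (\<lambda>x i. \<Sum>l<n. E l x i)) (Q x))"
    by (subst comp_sum_right[OF P]) (simp_all add: E_in bounded)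
  also have "\<dots> = P \<circ> Q" unfolding sum_E comp_idop_right[OF P] by (simp add: o_def)
  finally show ?thesis unfolding P_def Q_def entry_def by (simp add: comp_assoc)
qed

lemma entry_idop:
  assumes j: "j < n" and k: "k < n"
  shows "entry j k idop = (if j = k then E 0 else zeroop)"
proof -
  have "entry j k idop = (E 0 \<circ> adj (W j)) \<circ> (W k \<circ> E 0)"
    unfolding entry_def using comp_idop_right[OF bounded[OF left_factor_in[OF j]]] by simp
  also have "\<dots> = (if j = k then E 0 else zeroop)"
  proof (cases "j = k")
    case True
    then have "(E 0 \<circ> adj (W j)) \<circ> (W k \<circ> E 0) = E 0 \<circ> (adj (W j) \<circ> W j) \<circ> E 0"
      by (simp add: comp_assoc)
    then show ?thesis using True adj_W_W[OF j] E0_idem by simp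
  next
    case False
    have "(E 0 \<circ> adj (W j)) \<circ> (W k \<circ> E 0) = adj (W j) \<circ> (E j \<circ> E k) \<circ> W k"
      using E0_adj_W[OF j] W_E0[OF k] by (simp add: comp_assoc)
    then show ?thesis
      using False orthogonal[OF j k False] comp_zeroop_right[OF bounded[OF adj_in[OF W_in[OF j]]]]
      by simp
  qed
  finally show ?thesis .
qed

lemma entry_op_scale:
  "j < n \<Longrightarrow> k < n \<Longrightarrow> X \<in> R \<Longrightarrow> entry j k (op_scale c X) = op_scale c (entry j k X)"
  unfolding entry_def
  by (simp add: comp_op_scale_right op_scale_comp bounded left_factor_in)

lemma entry_op_diff: "j < n \<Longrightarrow> k < n \<Longrightarrow> X \<in> R \<Longrightarrow> Y \<in> R \<Longrightarrow>
  entry j k (op_diff X Y) = op_diff (entry j k X) (entry j k Y)"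
  unfolding entry_def
  by (simp add: comp_op_diff_right op_diff_comp bounded left_factor_in)

definition entry_bound :: real where
  "entry_bound = (\<Sum>j<n. opnorm (E 0 \<circ> adj (W j))) * (\<Sum>k<n. opnorm (W k \<circ> E 0))"

lemma entry_bound_nonneg: "0 \<le> entry_bound"
  unfolding entry_bound_def
  by (intro mult_nonneg_nonneg sum_nonneg opnorm_nonneg bounded left_factor_in right_factor_in) auto

lemma entry_norm_le:
  assumes j: "j < n" and k: "k < n" and X: "X \<in> R"
  shows "opnorm (entry j k X) \<le> entry_bound * opnorm X"
proof -
  let ?l = "opnorm (E 0 \<circ> adj (W j))" and ?r = "opnorm (W k \<circ> E 0)"
  have l: "?l \<le> (\<Sum>j<n. opnorm (E 0 \<circ> adj (W j)))"
    using j by (intro member_le_sum opnorm_nonneg bounded left_factor_in) auto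
  have r: "?r \<le> (\<Sum>k<n. opnorm (W k \<circ> E 0))"
    using k by (intro member_le_sum opnorm_nonneg bounded right_factor_in) auto
  have "opnorm (entry j k X) \<le> opnorm ((E 0 \<circ> adj (W j)) \<circ> X) * ?r"
    unfolding entry_def using j k X by (intro opnorm_comp_le bounded comp_in left_factor_in right_factor_in)
  also have "\<dots> \<le> ?l * opnorm X * ?r"
    using j k X by (intro mult_right_mono opnorm_comp_le opnorm_nonneg bounded left_factor_in right_factor_in)
  also have "\<dots> = (?l * ?r) * opnorm X" by (simp add: ac_simps)
  also have "\<dots> \<le> entry_bound * opnorm X"
    unfolding entry_bound_def using l r j k X
    by (intro mult_right_mono mult_mono opnorm_nonneg bounded left_factor_in right_factor_in
        order_trans[OF opnorm_nonneg l])
  finally show ?thesis .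
qed

definition proj :: "'i op_ring \<Rightarrow> 'i op" where
  "proj f = Rep_op_ring f (corner, E 0)"

definition embed :: "'i op \<Rightarrow> 'i op_ring" where
  "embed a = Abs_op_ring (\<lambda>k. if k = (corner, E 0) then a else zeroop)"

lemma proj_embed: "a \<in> corner \<Longrightarrow> proj (embed a) = a"
  unfolding proj_def embed_def
  by (subst Rep_Abs_op_ring) (auto simp: comm_op_ring_zeroop comm_op_ring_corner)

lemma proj_in_corner: "proj f \<in> corner"
  unfolding proj_def by (rule Rep_op_ring_in[OF comm_op_ring_corner])

lemma proj_bounded: "proj f \<in> bounded_ops"
  using bounded corner_subset proj_in_corner by blast

lemma proj_zero: "proj 0 = zeroop"
  unfolding proj_def by (simp add: Rep_op_ring_simps)

lemma proj_one: "proj 1 = E 0"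
  unfolding proj_def by (simp add: Rep_op_ring_simps comm_op_ring_corner)

lemma proj_plus: "proj (f + g) = op_plus (proj f) (proj g)"
  unfolding proj_def by (simp add: Rep_op_ring_simps)

lemma proj_times: "proj (f * g) = proj f \<circ> proj g"
  unfolding proj_def by (simp add: Rep_op_ring_simps)

lemma proj_minus: "proj (f - g) = op_diff (proj f) (proj g)"
  unfolding proj_def by (simp add: Rep_op_ring_simps)

lemma proj_uminus: "proj (- f) = op_diff zeroop (proj f)"
  unfolding proj_def by (simp add: Rep_op_ring_simps)

lemma proj_sum: "proj (sum f F) = (\<lambda>x i. \<Sum>l\<in>F. proj (f l) x i)"
  by (induction F rule: infinite_finite_induct)
     (simp_all add: proj_zero proj_plus op_plus_def zeroop_eq)

lemma proj_prod_cong: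
  "(\<And>i. i \<in> F \<Longrightarrow> proj (f i) = proj (g i)) \<Longrightarrow> proj (prod f F) = proj (prod g F)"
  by (induction F rule: infinite_finite_induct) (simp_all add: proj_times)

lemma proj_power_scale:
  assumes "proj f = op_scale c (E 0)"
  shows "proj (f ^ m) = op_scale (c ^ m) (E 0)"
proof (induction m)
  case 0
  then show ?case by (simp add: proj_one)
next
  case (Suc m)
  then have "proj (f ^ Suc m) = op_scale c (E 0) \<circ> op_scale (c ^ m) (E 0)"
    using assms by (simp add: proj_times)
  also have "\<dots> = op_scale (c ^ Suc m) (E 0)"
    by (simp add: op_scale_comp comp_op_scale_right E0_bounded op_scale_scale E0_idem)
  finally show ?case .
qed

lemma proj_det_cong:
  assumes A: "A \<in> carrier_mat n n" and B: "B \<in> carrier_mat n n"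
    and entries: "\<And>j k. j < n \<Longrightarrow> k < n \<Longrightarrow> proj (A $$ (j, k)) = proj (B $$ (j, k))"
  shows "proj (Determinant.det A) = proj (Determinant.det B)"
proof -
  have "proj (\<Prod>i = 0..<n. A $$ (i, p i)) = proj (\<Prod>i = 0..<n. B $$ (i, p i))"
    if "p permutes {0..<n}" for p
    using entries permutes_in_image[OF that] by (intro proj_prod_cong) simp
  then show ?thesis
    unfolding det_def'[OF A] det_def'[OF B] by (simp add: proj_sum proj_times)
qed

definition entry_mat :: "'i op \<Rightarrow> 'i op_ring mat" where
  "entry_mat X = Matrix.mat n n (\<lambda>(j, k). embed (entry j k X))"

lemma entry_mat_carrier [simp]: "entry_mat X \<in> carrier_mat n n"
  unfolding entry_mat_def by simp

lemma proj_entry_mat: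
  "j < n \<Longrightarrow> k < n \<Longrightarrow> X \<in> R \<Longrightarrow> proj (entry_mat X $$ (j, k)) = entry j k X"
  unfolding entry_mat_def by (simp add: proj_embed entry_in_corner)

definition corner_det :: "'i op \<Rightarrow> 'i op_ring" where
  "corner_det X = Determinant.det (entry_mat X)"

lemma proj_corner_det_comp:
  assumes X: "X \<in> R" and Y: "Y \<in> R"
  shows "proj (corner_det (X \<circ> Y)) = proj (corner_det X * corner_det Y)"
proof -
  have "proj (corner_det (X \<circ> Y)) = proj (Determinant.det (entry_mat X * entry_mat Y))"
    unfolding corner_det_def
  proof (rule proj_det_cong)
    fix j k assume j: "j < n" and k: "k < n"
    have "(entry_mat X * entry_mat Y) $$ (j, k) = (\<Sum>l\<in>{0..<n}. entry_mat X $$ (j, l) * entry_mat Y $$ (l, k))"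
      unfolding entry_mat_def using j k by (simp add: Matrix.scalar_prod_def)
    then have "proj ((entry_mat X * entry_mat Y) $$ (j, k))
        = (\<lambda>x i. \<Sum>l\<in>{0..<n}. proj (entry_mat X $$ (j, l) * entry_mat Y $$ (l, k)) x i)"
      by (simp add: proj_sum)
    also have "\<dots> = (\<lambda>x i. \<Sum>l<n. (entry j l X \<circ> entry l k Y) x i)"
      using j k X Y by (intro ext sum.cong) (auto simp: proj_times proj_entry_mat)
    also have "\<dots> = entry j k (X \<circ> Y)" by (rule entry_comp[OF j k X Y])
    finally show "proj (entry_mat (X \<circ> Y) $$ (j, k)) = proj ((entry_mat X * entry_mat Y) $$ (j, k))"
      using proj_entry_mat[OF j k comp_in[OF X Y]] by simp
  qed (simp_all add: mult_carrier_mat[OF entry_mat_carrier entry_mat_carrier])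
  then show ?thesis
    unfolding corner_det_def by (simp add: det_mult[OF entry_mat_carrier entry_mat_carrier])
qed

lemma proj_corner_det_scalar: "proj (corner_det (op_scale c idop)) = op_scale (c ^ n) (E 0)"
proof -
  have scaled_E0: "op_scale c (E 0) \<in> corner"
    using entry_in_corner[OF n_pos n_pos op_scale_in[OF idop_in, of c]]
    by (simp add: entry_op_scale[OF n_pos n_pos idop_in] entry_idop[OF n_pos n_pos])
  define D where "D = Matrix.mat n n (\<lambda>(j, k). if j = k then embed (op_scale c (E 0)) else 0)"
  have D: "D \<in> carrier_mat n n" unfolding D_def by simp
  have "proj (corner_det (op_scale c idop)) = proj (Determinant.det D)"
    unfolding corner_det_def
  proof (rule proj_det_cong[OF entry_mat_carrier D])
    fix j k assume j: "j < n" and k: "k < n"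
    then show "proj (entry_mat (op_scale c idop) $$ (j, k)) = proj (D $$ (j, k))"
      using proj_entry_mat[OF j k op_scale_in[OF idop_in]]
      by (simp add: D_def entry_op_scale[OF j k idop_in] entry_idop[OF j k] proj_embed[OF scaled_E0]
          proj_zero)
  qed
  also have "Determinant.det D = embed (op_scale c (E 0)) ^ n"
  proof -
    have "Determinant.det D = prod_list (diag_mat D)"
      by (rule det_lower_triangular[OF _ D]) (simp add: D_def)
    also have "\<dots> = (\<Prod>i = 0..<n. embed (op_scale c (E 0)))"
      using D by (simp add: prod_list_diag_prod D_def)
    finally show ?thesis by simp
  qed
  finally show ?thesis using proj_power_scale proj_embed[OF scaled_E0] by simp
qed

lemma proj_corner_det_idop: "proj (corner_det idop) = E 0"
  using proj_corner_det_scalar[of 1] by simp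

lemma proj_corner_det_square_comp:
  "X \<in> R \<Longrightarrow> proj (corner_det X ^ 2) = proj (corner_det (X \<circ> X))"
  by (simp add: proj_corner_det_comp power2_eq_square)

lemma proj_corner_det_square_symmetries:
  assumes "set ss \<subseteq> symmetries R"
  shows "foldr (\<circ>) ss idop \<in> R \<and> proj (corner_det (foldr (\<circ>) ss idop) ^ 2) = E 0"
  using assms
proof (induction ss)
  case Nil
  then show ?case using idop_in proj_corner_det_square_comp[OF idop_in]
    by (simp add: comp_idop_left idop_bounded proj_corner_det_idop)
next
  case (Cons s ss)
  let ?Y = "foldr (\<circ>) ss idop"
  have "s \<in> symmetries R" and "set ss \<subseteq> symmetries R" using Cons.prems by simp_all
  then have Y: "?Y \<in> R" "proj (corner_det ?Y ^ 2) = E 0" using Cons.IH by blast+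
  have s: "s \<in> R" "s \<circ> s = idop"
    using \<open>s \<in> symmetries R\<close> symmetry_square unfolding symmetries_def unitaries_def by blast+
  have "proj (corner_det (s \<circ> ?Y) ^ 2) = proj ((corner_det s * corner_det ?Y) ^ 2)"
    by (simp add: power2_eq_square proj_times proj_corner_det_comp[OF s(1) Y(1)])
  also have "\<dots> = proj (corner_det s ^ 2) \<circ> proj (corner_det ?Y ^ 2)"
    by (simp add: power_mult_distrib proj_times)
  also have "\<dots> = E 0"
    using proj_corner_det_square_comp[OF s(1)] s(2) Y(2) by (simp add: proj_corner_det_idop E0_idem)
  finally have "proj (corner_det (s \<circ> ?Y) ^ 2) = E 0" .
  moreover have "foldr (\<circ>) (s # ss) idop = s \<circ> ?Y" by simp
  ultimately show ?case using comp_in[OF s(1) Y(1)] by metis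
qed

lemma proj_corner_det_square_sym_products:
  "V \<in> sym_products R m \<Longrightarrow> V \<in> R \<and> proj (corner_det V ^ 2) = E 0"
  unfolding sym_products_def using proj_corner_det_square_symmetries by blast

sublocale corner_norm: ring_seminorm "\<lambda>f. opnorm (proj f)"
proof
  fix x y :: "'i op_ring"
  show "0 \<le> opnorm (proj x)" by (rule opnorm_nonneg[OF proj_bounded])
  show "opnorm (proj 0) = 0" by (simp add: proj_zero)
  show "opnorm (proj (x + y)) \<le> opnorm (proj x) + opnorm (proj y)"
    unfolding proj_plus by (rule opnorm_op_plus_le[OF proj_bounded proj_bounded])
  show "opnorm (proj (x * y)) \<le> opnorm (proj x) * opnorm (proj y)"
    unfolding proj_times by (rule opnorm_comp_le[OF proj_bounded proj_bounded])
  show "opnorm (proj (- x)) \<le> opnorm (proj x)"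
    using opnorm_op_diff_le[OF zeroop_bounded proj_bounded] by (simp add: proj_uminus)
qed

lemma proj_entry_mat_norm_le:
  "X \<in> R \<Longrightarrow> opnorm X \<le> r \<Longrightarrow> j < n \<Longrightarrow> k < n \<Longrightarrow>
    opnorm (proj (entry_mat X $$ (j, k))) \<le> entry_bound * r"
  using entry_norm_le[of j k X] mult_left_mono[of "opnorm X" r entry_bound] entry_bound_nonneg
  by (simp add: proj_entry_mat)

lemma corner_det_norm_le:
  "X \<in> R \<Longrightarrow> opnorm X \<le> r \<Longrightarrow> opnorm (proj (corner_det X)) \<le> fact n * (entry_bound * r) ^ n"
  unfolding corner_det_def using proj_entry_mat_norm_le n_pos
  by (intro corner_norm.det_le) simp_all

lemma corner_det_diff_norm_le:
  assumes X: "X \<in> R" "opnorm X \<le> r" and Y: "Y \<in> R" "opnorm Y \<le> r"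
  shows "opnorm (proj (corner_det X - corner_det Y))
    \<le> fact n * (real n * (entry_bound * r) ^ (n - 1) * (entry_bound * opnorm (op_diff X Y)))"
  unfolding corner_det_def
proof (intro corner_norm.det_diff_le)
  fix j k assume "j < n" "k < n"
  then show "opnorm (proj (entry_mat X $$ (j, k) - entry_mat Y $$ (j, k)))
      \<le> entry_bound * opnorm (op_diff X Y)"
    using entry_norm_le[OF _ _ op_diff_in[OF X(1) Y(1)]] X Y
    by (simp add: proj_minus proj_entry_mat entry_op_diff)
qed (use proj_entry_mat_norm_le X Y n_pos in simp_all)

lemma corner_det_square_lipschitz:
  "\<exists>L. \<forall>X\<in>R. \<forall>Y\<in>R. opnorm X \<le> r \<longrightarrow> opnorm Y \<le> r \<longrightarrow>
     opnorm (op_diff (proj (corner_det X ^ 2)) (proj (corner_det Y ^ 2))) \<le> L * opnorm (op_diff X Y)"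
proof -
  let ?N = "\<lambda>f. opnorm (proj f)" and ?K = "entry_bound * r"
  define L where "L = fact n * (real n * ?K ^ (n - 1) * entry_bound) * (2 * (fact n * ?K ^ n))"
  have "?N (corner_det X ^ 2 - corner_det Y ^ 2) \<le> L * opnorm (op_diff X Y)"
    if X: "X \<in> R" "opnorm X \<le> r" and Y: "Y \<in> R" "opnorm Y \<le> r" for X Y
  proof -
    note diff = corner_det_diff_norm_le[OF X Y]
    have "?N (corner_det X ^ 2 - corner_det Y ^ 2)
        \<le> ?N (corner_det X - corner_det Y) * (?N (corner_det X) + ?N (corner_det Y))"
      by (rule corner_norm.diff_squares_le)
    also have "\<dots> \<le> fact n * (real n * ?K ^ (n - 1) * (entry_bound * opnorm (op_diff X Y)))
        * (fact n * ?K ^ n + fact n * ?K ^ n)"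
      using corner_det_norm_le[OF X] corner_det_norm_le[OF Y] order_trans[OF corner_norm.nonneg diff]
      by (intro mult_mono add_mono diff corner_norm.nonneg add_nonneg_nonneg)
    also have "\<dots> = L * opnorm (op_diff X Y)" by (simp add: L_def algebra_simps)
    finally show ?thesis .
  qed
  then show ?thesis by (auto simp: proj_minus[symmetric])
qed

lemma op_scale_E0_opnorm_pos: "c \<noteq> 0 \<Longrightarrow> 0 < opnorm (op_scale c (E 0))"
proof -
  assume "c \<noteq> 0"
  obtain x where x: "x \<in> l2" "E 0 x \<noteq> (\<lambda>i. 0)" using E0_nonzero by blast
  then have "op_scale c (E 0) x \<noteq> (\<lambda>i. 0)" using \<open>c \<noteq> 0\<close> by (simp add: op_scale_def fun_eq_iff)
  then show ?thesis by (rule opnorm_pos[OF op_scale_bounded[OF E0_bounded] x(1)])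
qed

lemma unitary_with_corner_det_square_neg:
  "\<exists>U\<in>unitaries R. proj (corner_det U ^ 2) = op_scale (-1) (E 0)"
proof
  define \<omega> where "\<omega> = cis (pi / (2 * real n))"
  have "\<omega> ^ n = cis (real n * (pi / (2 * real n)))"
    unfolding \<omega>_def by (rule Complex.DeMoivre)
  also have "real n * (pi / (2 * real n)) = pi / 2"
    using n_pos by (simp add: field_simps)
  finally have "\<omega> ^ n = \<i>" by (simp add: cis_pi_half)
  then show "proj (corner_det (op_scale \<omega> idop) ^ 2) = op_scale (-1) (E 0)"
    using proj_power_scale[OF proj_corner_det_scalar[of \<omega>], of 2] by simp
  show "op_scale \<omega> idop \<in> unitaries R"
    by (rule scalar_unitary) (simp add: \<omega>_def cis_cnj cis_mult)
qed

lemma sym_products_bounded_away: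
  assumes U: "U \<in> R" and det_U: "proj (corner_det U ^ 2) = op_scale (-1) (E 0)"
  shows "\<exists>\<epsilon>>0. \<forall>V\<in>sym_products R m. \<epsilon> \<le> opnorm (op_diff U V)"
proof -
  obtain L where L: "\<And>X Y. X \<in> R \<Longrightarrow> Y \<in> R \<Longrightarrow> opnorm X \<le> opnorm U + 1 \<Longrightarrow>
      opnorm Y \<le> opnorm U + 1 \<Longrightarrow>
      opnorm (op_diff (proj (corner_det X ^ 2)) (proj (corner_det Y ^ 2))) \<le> L * opnorm (op_diff X Y)"
    using corner_det_square_lipschitz by blast
  define gap where "gap = opnorm (op_scale (-2) (E 0))"
  have gap: "0 < gap" unfolding gap_def by (rule op_scale_E0_opnorm_pos) simp
  define \<epsilon> where "\<epsilon> = min 1 (gap / (\<bar>L\<bar> + 1))"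
  have "\<epsilon> \<le> opnorm (op_diff U V)" if V: "V \<in> sym_products R m" for V
  proof (rule ccontr)
    assume "\<not> \<epsilon> \<le> opnorm (op_diff U V)"
    then have close: "opnorm (op_diff U V) < \<epsilon>" by simp
    have V_in: "V \<in> R" and det_V: "proj (corner_det V ^ 2) = E 0"
      using proj_corner_det_square_sym_products[OF V] by auto
    have UV: "op_diff U V \<in> bounded_ops" using bounded op_diff_in[OF U V_in] by blast
    have "V = op_diff U (op_diff U V)" by (simp add: op_diff_def)
    then have "opnorm V \<le> opnorm U + opnorm (op_diff U V)"
      using opnorm_op_diff_le[OF bounded[OF U] UV] by simp
    then have V_le: "opnorm V \<le> opnorm U + 1" using close by (simp add: \<epsilon>_def)
    have "op_diff (proj (corner_det U ^ 2)) (proj (corner_det V ^ 2)) = op_scale (-2) (E 0)"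
      unfolding det_U det_V by (simp add: op_diff_def op_scale_def)
    then have "gap \<le> L * opnorm (op_diff U V)"
      unfolding gap_def using L[OF U V_in _ V_le] by simp
    also have "\<dots> \<le> \<bar>L\<bar> * opnorm (op_diff U V)"
      using opnorm_nonneg[OF UV] by (simp add: mult_right_mono)
    also have "\<dots> \<le> \<bar>L\<bar> * \<epsilon>"
      using close by (simp add: mult_left_mono)
    also have "\<dots> < gap"
      using gap by (simp add: \<epsilon>_def min_def field_simps)
    finally show False by simp
  qed
  moreover have "0 < \<epsilon>" using gap by (simp add: \<epsilon>_def)
  ultimately show ?thesis by blast
qed

theorem sym_products_not_dense: "\<not> norm_dense_in (sym_products R m) (unitaries R)"
proof
  assume dense: "norm_dense_in (sym_products R m) (unitaries R)"
  obtain U where U: "U \<in> unitaries R" "proj (corner_det U ^ 2) = op_scale (-1) (E 0)"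
    using unitary_with_corner_det_square_neg by blast
  then obtain \<epsilon> where "\<epsilon> > 0" and "\<forall>V\<in>sym_products R m. \<epsilon> \<le> opnorm (op_diff U V)"
    using sym_products_bounded_away unfolding unitaries_def by blast
  then show False
    using dense U(1) unfolding norm_dense_in_def by (meson not_less)
qed

end

theorem corollary2p5:
  fixes R :: "'i op set" and n :: nat
  assumes "n \<ge> 1" and "type_I_n n R"
  shows "\<not> norm_dense_in (sym_products R 4) (unitaries R)"
proof -
  obtain E W where "type_I_n_frame R n E W"
    using type_I_n_frame_exists[OF assms] by blast
  then show ?thesis by (rule type_I_n_frame.sym_products_not_dense)
qed

end
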